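(* Let $X$ be a random variable, $Z$ a random variable jointly distributed with $X$, and $f,g$ real functions with $\mathbb{E}[f(X)^2],\mathbb{E}[g(X)^2]<\infty$ and $\operatorname{Var}[g(X)]>0$. If $\operatorname{Var}(\mathbb{E}[g(X)\mid Z])=0$, then $$\operatorname{Var}\mathbb{E}[f(X)\mid Z]\le\operatorname{Var}[f(X)]-\frac{\operatorname{Cov}(f(X),g(X))^2}{\operatorname{Var}[g(X)]}.$$ *)

theory Defs
  imports "HOL-Probability.Probability"
begin

text \<open>Variance and covariance of real random variables on a (probability) measure space M,
  written out as the library's Bochner integrals (the library's variance is a locale
  abbreviation of exactly this term).\<close>

definition var :: "'w measure \<Rightarrow> ('w \<Rightarrow> real) \<Rightarrow> real" where
  "var M Y = (\<integral>w. (Y w - (\<integral>v. Y v \<partial>M))\<^sup>2 \<partial>M)"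

definition cov :: "'w measure \<Rightarrow> ('w \<Rightarrow> real) \<Rightarrow> ('w \<Rightarrow> real) \<Rightarrow> real" where
  "cov M Y W = (\<integral>w. (Y w - (\<integral>v. Y v \<partial>M)) * (W w - (\<integral>v. W v \<partial>M)) \<partial>M)"

definition cond_exp_rv :: "'w measure \<Rightarrow> ('w \<Rightarrow> 'b) \<Rightarrow> 'b measure \<Rightarrow> ('w \<Rightarrow> real) \<Rightarrow> ('w \<Rightarrow> real)" where
  "cond_exp_rv M Z K Y = real_cond_exp M (vimage_algebra (space M) Z K) Y"

end

theory Submission
  imports Defs
begin

text \<open>Write \<open>F = f(X)\<close>, \<open>G = g(X)\<close> and \<open>C = E[F | Z]\<close>. Since \<open>E[G | Z]\<close> has variance 0
  it is a.s. the constant \<open>E G\<close>, so \<open>G - E G\<close> is orthogonal to every square integrable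
  \<open>\<sigma>(Z)\<close>-measurable function, in particular to \<open>C - E F\<close>; hence
  \<open>Cov(F, G) = E[(F - C)(G - E G)]\<close>. By Cauchy-Schwarz its square is at most
  \<open>E[(F - C)\<^sup>2] Var G\<close>, and \<open>E[(F - C)\<^sup>2] = Var F - Var C\<close> by the law of total variance.\<close>

definition square_integrable :: "'a measure \<Rightarrow> ('a \<Rightarrow> real) \<Rightarrow> bool" where
  "square_integrable M u \<longleftrightarrow> u \<in> borel_measurable M \<and> integrable M (\<lambda>x. (u x)\<^sup>2)"

lemma square_integrable_integrable_mult:
  assumes "square_integrable M u" and "square_integrable M v"
  shows "integrable M (\<lambda>x. u x * v x)"
proof (rule Bochner_Integration.integrable_bound)
  show "integrable M (\<lambda>x. (u x)\<^sup>2 + (v x)\<^sup>2)"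
    using assms by (auto simp: square_integrable_def)
  show "(\<lambda>x. u x * v x) \<in> borel_measurable M"
    using assms by (auto simp: square_integrable_def)
  have "\<bar>u x * v x\<bar> \<le> (u x)\<^sup>2 + (v x)\<^sup>2" for x
  proof -
    have "2 * (\<bar>u x\<bar> * \<bar>v x\<bar>) \<le> (u x)\<^sup>2 + (v x)\<^sup>2"
      using sum_squares_bound[of "\<bar>u x\<bar>" "\<bar>v x\<bar>"] by (simp add: mult.assoc)
    moreover have "0 \<le> \<bar>u x\<bar> * \<bar>v x\<bar>"
      by simp
    ultimately show ?thesis
      unfolding abs_mult by linarith
  qed
  then show "AE x in M. norm (u x * v x) \<le> norm ((u x)\<^sup>2 + (v x)\<^sup>2)"
    by simp
qed

lemma square_integrable_diff [intro]:
  assumes "square_integrable M u" and "square_integrable M v"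
  shows "square_integrable M (\<lambda>x. u x - v x)"
  using assms square_integrable_integrable_mult[OF assms]
  by (auto simp: square_integrable_def power2_diff mult.assoc)

lemma (in finite_measure) square_integrable_const [intro]: "square_integrable M (\<lambda>_. c)"
  by (simp add: square_integrable_def)

lemma (in finite_measure) square_integrable_integrable:
  "square_integrable M u \<Longrightarrow> integrable M u"
  by (auto simp: square_integrable_def intro: square_integrable_imp_integrable)

lemma (in finite_measure_subalgebra) square_integrable_real_cond_exp [intro]:
  assumes "square_integrable M Y"
  shows "square_integrable M (real_cond_exp M F Y)"
  using integrable_convex_cond_exp[of Y UNIV, where q = power2] assms
    square_integrable_integrable[OF assms]
  by (auto simp: square_integrable_def convex_power2)

lemma quadratic_nonneg_imp_discriminant_nonpos:
  fixes a b c :: real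
  assumes nonneg: "\<And>t. 0 \<le> a - 2 * t * b + t\<^sup>2 * c" and "0 \<le> c"
  shows "b\<^sup>2 \<le> a * c"
proof (cases "c = 0")
  case True
  have "b = 0"
  proof (rule ccontr)
    assume "b \<noteq> 0"
    with nonneg[of "(a + 1) / (2 * b)"] True show False
      by (simp add: field_simps)
  qed
  with True show ?thesis by simp
next
  case False
  with \<open>0 \<le> c\<close> have "0 < c" by simp
  from nonneg[of "b / c"] have "0 \<le> a - b\<^sup>2 / c"
    using \<open>0 < c\<close> by (simp add: power2_eq_square field_simps)
  with \<open>0 < c\<close> show ?thesis by (simp add: field_simps)
qed

lemma Cauchy_Schwarz_integral:
  assumes u: "square_integrable M u" and v: "square_integrable M v"
  shows "(\<integral>x. u x * v x \<partial>M)\<^sup>2 \<le> (\<integral>x. (u x)\<^sup>2 \<partial>M) * (\<integral>x. (v x)\<^sup>2 \<partial>M)"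
proof (rule quadratic_nonneg_imp_discriminant_nonpos)
  fix t
  have uv: "integrable M (\<lambda>x. u x * v x)"
    using square_integrable_integrable_mult[OF u v] .
  have "0 \<le> (\<integral>x. (u x - t * v x)\<^sup>2 \<partial>M)"
    by simp
  also have "\<dots> = (\<integral>x. (u x)\<^sup>2 - 2 * t * (u x * v x) + t\<^sup>2 * (v x)\<^sup>2 \<partial>M)"
    by (simp add: power2_diff power_mult_distrib algebra_simps)
  also have "\<dots> = (\<integral>x. (u x)\<^sup>2 \<partial>M) - 2 * t * (\<integral>x. u x * v x \<partial>M) + t\<^sup>2 * (\<integral>x. (v x)\<^sup>2 \<partial>M)"
    using u v uv by (simp add: square_integrable_def)
  finally show "0 \<le> (\<integral>x. (u x)\<^sup>2 \<partial>M) - 2 * t * (\<integral>x. u x * v x \<partial>M) + t\<^sup>2 * (\<integral>x. (v x)\<^sup>2 \<partial>M)" .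
qed simp

lemma subalgebra_vimage_algebra:
  assumes "Z \<in> measurable M K"
  shows "subalgebra M (vimage_algebra (space M) Z K)"
  using assms by (auto simp: subalgebra_def sets_vimage_algebra2 measurable_def)

lemma (in prob_space) AE_eq_expectation_if_var_eq_0:
  assumes "square_integrable M Y" and "var M Y = 0"
  shows "AE x in M. Y x = expectation Y"
proof -
  have "integrable M (\<lambda>x. (Y x - expectation Y)\<^sup>2)"
    using square_integrable_diff[OF assms(1) square_integrable_const]
    by (simp add: square_integrable_def)
  with assms(2) have "AE x in M. (Y x - expectation Y)\<^sup>2 = 0"
    by (simp add: var_def integral_nonneg_eq_0_iff_AE)
  then show ?thesis by simp
qed

lemma (in sigma_finite_subalgebra) integral_mult_real_cond_exp_residual:
  fixes h Y :: "'a \<Rightarrow> real"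
  assumes "h \<in> borel_measurable F" and "Y \<in> borel_measurable M"
    and "integrable M (\<lambda>x. h x * Y x)"
  shows "(\<integral>x. h x * (Y x - real_cond_exp M F Y x) \<partial>M) = 0"
  using real_cond_exp_intg[OF assms(3,1,2)] assms(3) by (simp add: right_diff_distrib)

locale prob_space_subalgebra = prob_space M + finite_measure_subalgebra M F
  for M F :: "'a measure"
begin

lemma var_eq_var_real_cond_exp_add_residual:
  assumes Y: "square_integrable M Y"
  shows "var M Y = var M (real_cond_exp M F Y) + (\<integral>x. (Y x - real_cond_exp M F Y x)\<^sup>2 \<partial>M)"
proof -
  define C where "C = real_cond_exp M F Y"
  define a where "a = expectation Y"
  have C: "square_integrable M C"
    using Y by (auto simp: C_def)
  have [measurable]: "Y \<in> borel_measurable M" "C \<in> borel_measurable F"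
    using Y by (auto simp: square_integrable_def C_def)
  have "expectation C = a"
    unfolding C_def a_def by (rule real_cond_exp_int(2)[OF square_integrable_integrable[OF Y]])
  have sq: "square_integrable M (\<lambda>x. Y x - C x)" "square_integrable M (\<lambda>x. C x - a)"
    using Y C by auto
  have "var M Y = (\<integral>x. (Y x - C x)\<^sup>2 + (C x - a)\<^sup>2 + 2 * ((C x - a) * (Y x - C x)) \<partial>M)"
    unfolding var_def a_def[symmetric]
    by (rule Bochner_Integration.integral_cong) (auto simp: power2_eq_square algebra_simps)
  also have "\<dots> = (\<integral>x. (Y x - C x)\<^sup>2 \<partial>M) + (\<integral>x. (C x - a)\<^sup>2 \<partial>M)
      + 2 * (\<integral>x. (C x - a) * (Y x - C x) \<partial>M)"
    using sq square_integrable_integrable_mult[OF sq(2,1)]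
    by (simp add: square_integrable_def)
  also have "(\<integral>x. (C x - a) * (Y x - C x) \<partial>M) = 0"
    unfolding C_def
    by (rule integral_mult_real_cond_exp_residual)
      (use Y C in \<open>auto simp: C_def intro!: square_integrable_integrable_mult\<close>)
  finally show ?thesis
    using \<open>expectation C = a\<close> unfolding C_def[symmetric] var_def a_def by simp
qed

lemma integral_mult_centered_eq_0_if_real_cond_exp_const:
  assumes "h \<in> borel_measurable F" and h: "square_integrable M h" and W: "square_integrable M W"
    and const: "AE x in M. real_cond_exp M F W x = expectation W"
  shows "(\<integral>x. h x * (W x - expectation W) \<partial>M) = 0"
proof -
  define D where "D = real_cond_exp M F W"
  have D: "square_integrable M D"
    using W by (auto simp: D_def)
  have "(\<integral>x. h x * (W x - expectation W) \<partial>M)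
      = (\<integral>x. h x * (W x - D x) \<partial>M) + (\<integral>x. h x * (D x - expectation W) \<partial>M)"
    using h W D
    by (subst Bochner_Integration.integral_add[symmetric])
      (auto intro!: square_integrable_integrable_mult simp: algebra_simps)
  also have "(\<integral>x. h x * (W x - D x) \<partial>M) = 0"
    unfolding D_def
    by (rule integral_mult_real_cond_exp_residual)
      (use assms in \<open>auto simp: square_integrable_def intro!: square_integrable_integrable_mult\<close>)
  also have "(\<integral>x. h x * (D x - expectation W) \<partial>M) = 0"
    using const by (auto simp: D_def intro!: integral_eq_zero_AE elim!: eventually_mono)
  finally show ?thesis by simp
qed

lemma cov_eq_integral_residual_if_var_real_cond_exp_eq_0:
  assumes Y: "square_integrable M Y" and W: "square_integrable M W"
    and var_0: "var M (real_cond_exp M F W) = 0"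
  shows "cov M Y W = (\<integral>x. (Y x - real_cond_exp M F Y x) * (W x - expectation W) \<partial>M)"
proof -
  define C where "C = real_cond_exp M F Y"
  define a where "a = expectation Y"
  define b where "b = expectation W"
  have C: "square_integrable M C" and "C \<in> borel_measurable F"
    using Y by (auto simp: C_def)
  have "AE x in M. real_cond_exp M F W x = b"
    using AE_eq_expectation_if_var_eq_0[OF _ var_0] W
      real_cond_exp_int(2)[OF square_integrable_integrable[OF W]]
    by (auto simp: b_def)
  have "cov M Y W = (\<integral>x. (Y x - C x) * (W x - b) + (C x - a) * (W x - b) \<partial>M)"
    unfolding cov_def a_def[symmetric] b_def[symmetric]
    by (rule Bochner_Integration.integral_cong) (auto simp: algebra_simps)
  also have "\<dots> = (\<integral>x. (Y x - C x) * (W x - b) \<partial>M) + (\<integral>x. (C x - a) * (W x - b) \<partial>M)"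
    by (rule Bochner_Integration.integral_add)
      (use Y W C in \<open>auto intro!: square_integrable_integrable_mult\<close>)
  also have "(\<integral>x. (C x - a) * (W x - b) \<partial>M) = 0"
    unfolding b_def
    by (rule integral_mult_centered_eq_0_if_real_cond_exp_const)
      (use C W \<open>C \<in> borel_measurable F\<close> \<open>AE x in M. real_cond_exp M F W x = b\<close> in \<open>auto simp: b_def\<close>)
  finally show ?thesis
    by (simp add: C_def b_def)
qed

end

theorem corollary4:
  fixes M :: "'w measure" and N :: "'a measure" and K :: "'b measure"
    and X :: "'w \<Rightarrow> 'a" and Z :: "'w \<Rightarrow> 'b" and f g :: "'a \<Rightarrow> real"
  assumes "prob_space M"
    and "X \<in> measurable M N" and "Z \<in> measurable M K"
    and "f \<in> borel_measurable N" and "g \<in> borel_measurable N"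
    and "integrable M (\<lambda>w. (f (X w))\<^sup>2)" and "integrable M (\<lambda>w. (g (X w))\<^sup>2)"
    and "var M (\<lambda>w. g (X w)) > 0"
    and "var M (cond_exp_rv M Z K (\<lambda>w. g (X w))) = 0"
  shows "var M (cond_exp_rv M Z K (\<lambda>w. f (X w)))
           \<le> var M (\<lambda>w. f (X w)) - (cov M (\<lambda>w. f (X w)) (\<lambda>w. g (X w)))\<^sup>2 / var M (\<lambda>w. g (X w))"
proof -
  let ?S = "vimage_algebra (space M) Z K"
  let ?F = "\<lambda>w. f (X w)" and ?G = "\<lambda>w. g (X w)"
  let ?C = "real_cond_exp M ?S ?F"
  interpret prob_space M by fact
  interpret prob_space_subalgebra M ?S
    by unfold_locales (rule subalgebra_vimage_algebra[OF assms(3)])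
  have F: "square_integrable M ?F" and G: "square_integrable M ?G"
    using assms(2,4-7) by (auto simp: square_integrable_def)
  have "(cov M ?F ?G)\<^sup>2 = (\<integral>w. (?F w - ?C w) * (?G w - expectation ?G) \<partial>M)\<^sup>2"
    using cov_eq_integral_residual_if_var_real_cond_exp_eq_0[OF F G] assms(9)
    by (simp add: cond_exp_rv_def)
  also have "\<dots> \<le> (\<integral>w. (?F w - ?C w)\<^sup>2 \<partial>M) * var M ?G"
    unfolding var_def using F G by (intro Cauchy_Schwarz_integral) auto
  also have "\<dots> = (var M ?F - var M ?C) * var M ?G"
    using var_eq_var_real_cond_exp_add_residual[OF F] by simp
  finally show ?thesis
    using assms(8) by (simp add: cond_exp_rv_def field_simps)
qed

end
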